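(* Let $G$ be a bipartite graph with minimum degree $\delta$. Then $R(G)\leqslant\sqrt{\delta}$. Moreover, if $\delta\geqslant 2$, or if $\delta=1$ and $G$ has a connected component with minimum degree $1$ that is not isomorphic to $K_2$, then $R(G)<\sqrt{\delta}$.
   Context: All graphs are simple. For a graph $G$ of order $n$ with adjacency eigenvalues $\lambda_1\geqslant\cdots\geqslant\lambda_n$, the HL-index is $R(G)=\max\{|\lambda_{\lfloor (n+1)/2\rfloor}|,\ |\lambda_{\lceil (n+1)/2\rceil}|\}$. *)

theory Defs
  imports "Jordan_Normal_Form.Char_Poly"
begin

definition simple_graph :: "nat \<Rightarrow> (nat \<Rightarrow> nat \<Rightarrow> bool) \<Rightarrow> bool" where
  "simple_graph n E \<longleftrightarrow>
     (\<forall>u<n. \<forall>v<n. E u v \<longrightarrow> E v u) \<and> (\<forall>v<n. \<not> E v v)"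

definition adj_matrix :: "nat \<Rightarrow> (nat \<Rightarrow> nat \<Rightarrow> bool) \<Rightarrow> real mat" where
  "adj_matrix n E = mat n n (\<lambda>(i, j). if E i j then 1 else 0)"

text \<open>Adjacency eigenvalues, listed with multiplicity in non-increasing order
  (lambda_1 \<ge> ... \<ge> lambda_n; lambda_k is the (k-1)-th list entry).\<close>
definition eigenvalues_desc :: "nat \<Rightarrow> (nat \<Rightarrow> nat \<Rightarrow> bool) \<Rightarrow> real list" where
  "eigenvalues_desc n E = (THE ls. length ls = n \<and> sorted (rev ls) \<and>
      char_poly (adj_matrix n E) = (\<Prod>x\<leftarrow>ls. [:- x, 1:]))"

definition HL_index :: "nat \<Rightarrow> (nat \<Rightarrow> nat \<Rightarrow> bool) \<Rightarrow> real" where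
  "HL_index n E = (let ls = eigenvalues_desc n E in
     max \<bar>ls ! ((n + 1) div 2 - 1)\<bar> \<bar>ls ! ((n + 2) div 2 - 1)\<bar>)"

definition degree :: "nat \<Rightarrow> (nat \<Rightarrow> nat \<Rightarrow> bool) \<Rightarrow> nat \<Rightarrow> nat" where
  "degree n E v = card {w. w < n \<and> E v w}"

definition min_degree :: "nat \<Rightarrow> (nat \<Rightarrow> nat \<Rightarrow> bool) \<Rightarrow> nat" where
  "min_degree n E = Min (degree n E ` {0..<n})"

definition bipartite :: "nat \<Rightarrow> (nat \<Rightarrow> nat \<Rightarrow> bool) \<Rightarrow> bool" where
  "bipartite n E \<longleftrightarrow> (\<exists>X \<subseteq> {0..<n}. \<forall>u<n. \<forall>v<n. E u v \<longrightarrow> (u \<in> X \<longleftrightarrow> v \<notin> X))"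

definition reachable :: "nat \<Rightarrow> (nat \<Rightarrow> nat \<Rightarrow> bool) \<Rightarrow> nat \<Rightarrow> nat \<Rightarrow> bool" where
  "reachable n E = (\<lambda>u v. u < n \<and> v < n \<and> E u v)\<^sup>*\<^sup>*"

definition component :: "nat \<Rightarrow> (nat \<Rightarrow> nat \<Rightarrow> bool) \<Rightarrow> nat \<Rightarrow> nat set" where
  "component n E v = {w. w < n \<and> reachable n E v w}"

definition is_component :: "nat \<Rightarrow> (nat \<Rightarrow> nat \<Rightarrow> bool) \<Rightarrow> nat set \<Rightarrow> bool" where
  "is_component n E C \<longleftrightarrow> (\<exists>v<n. C = component n E v)"

definition min_degree_on :: "(nat \<Rightarrow> nat \<Rightarrow> bool) \<Rightarrow> nat set \<Rightarrow> nat" where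
  "min_degree_on E C = Min ((\<lambda>v. card {w \<in> C. E v w}) ` C)"

definition iso_K2_on :: "(nat \<Rightarrow> nat \<Rightarrow> bool) \<Rightarrow> nat set \<Rightarrow> bool" where
  "iso_K2_on E C \<longleftrightarrow> (\<exists>u v. u \<noteq> v \<and> C = {u, v} \<and> E u v)"

end

theory Submission
  imports Defs "HOL-Analysis.Function_Topology"
begin

text \<open>
  The spectrum of a bipartite graph is symmetric about \<open>0\<close> (conjugate the adjacency matrix \<open>A\<close>
  by the sign matrix of a bipartition), so the two middle eigenvalues have the least absolute value
  among all eigenvalues. The least eigenvalue of \<open>A\<^sup>2\<close> minimises the Rayleigh quotient, so it is
  at most \<open>(A\<^sup>2)\<^sub>x\<^sub>x = deg x = \<delta>\<close> for a vertex \<open>x\<close> of minimum degree; it is the square of an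
  eigenvalue \<open>\<mu>\<close> of \<open>A\<close>, whence \<open>R(G) \<le> |\<mu>| \<le> \<surd>\<delta>\<close>. If \<open>\<mu>\<^sup>2 = \<delta>\<close>, the unit vector at \<open>x\<close> is itself
  a minimiser and hence an eigenvector of \<open>A\<^sup>2\<close>, so no vertex other than \<open>x\<close> shares a neighbour
  with \<open>x\<close>; the hypotheses of the strict inequality provide such a vertex.
\<close>

section \<open>Products of linear factors\<close>

lemma prod_linear_factors_nonzero: "(\<Prod>x\<leftarrow>xs. [:- (x::'a::idom), 1:]) \<noteq> 0"
  by (auto simp: prod_list_zero_iff)

lemma degree_prod_linear_factors:
  "Polynomial.degree (\<Prod>x\<leftarrow>xs. [:- (x::'a::idom), 1:]) = length xs"
proof (induction xs)
  case (Cons a xs)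
  have "Polynomial.degree ([:- a, 1:] * (\<Prod>x\<leftarrow>xs. [:- x, 1:])) = 1 + length xs"
    by (subst degree_mult_eq) (use prod_linear_factors_nonzero[of xs] Cons.IH in auto)
  then show ?case by simp
qed simp

lemma poly_prod_linear_factors:
  "poly (\<Prod>x\<leftarrow>xs. [:- (x::'a::idom), 1:]) a = (\<Prod>x\<leftarrow>xs. a - x)"
  by (induction xs) (simp_all add: algebra_simps)

lemma root_prod_linear_factors_iff:
  "poly (\<Prod>x\<leftarrow>xs. [:- (x::'a::idom), 1:]) a = 0 \<longleftrightarrow> a \<in> set xs"
  by (auto simp: poly_prod_linear_factors prod_list_zero_iff)

lemma prod_linear_factors_eq_imp_mset_eq:
  fixes xs ys :: "'a::idom list"
  assumes "(\<Prod>x\<leftarrow>xs. [:- x, 1:]) = (\<Prod>y\<leftarrow>ys. [:- y, 1:])"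
  shows "mset xs = mset ys"
  using assms
proof (induction xs arbitrary: ys)
  case Nil
  then show ?case using degree_prod_linear_factors[of ys] by simp
next
  case (Cons x xs)
  have xy: "x \<in> set ys"
    using Cons.prems root_prod_linear_factors_iff[of ys x] root_prod_linear_factors_iff[of "x # xs" x]
    by simp
  have "[:- x, 1:] * (\<Prod>x\<leftarrow>xs. [:- x, 1:]) = [:- x, 1:] * (\<Prod>y\<leftarrow>remove1 x ys. [:- y, 1:])"
    using Cons.prems prod_list_map_remove1[OF xy, of "\<lambda>y. [:- y, 1:]"] by simp
  then have "(\<Prod>x\<leftarrow>xs. [:- x, 1:]) = (\<Prod>y\<leftarrow>remove1 x ys. [:- y, 1:])"
    by (subst (asm) mult_left_cancel) auto
  from Cons.IH[OF this] xy show ?case by simp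
qed

lemma poly_eq_prod_linear_factors:
  fixes p :: "'a::{idom,ring_char_0} poly"
  assumes "\<And>t. poly p t = (\<Prod>x\<leftarrow>xs. t - x)"
  shows "p = (\<Prod>x\<leftarrow>xs. [:- x, 1:])"
  using assms by (simp add: poly_eq_poly_eq_iff[symmetric] fun_eq_iff poly_prod_linear_factors)

section \<open>Real symmetric matrices\<close>

lemma eigenvalue_real_if_symmetric:
  fixes A :: "real mat"
  assumes A: "A \<in> carrier_mat n n" and sym: "\<And>i j. i < n \<Longrightarrow> j < n \<Longrightarrow> A $$ (i,j) = A $$ (j,i)"
    and ev: "eigenvalue (map_mat complex_of_real A) z"
  shows "Im z = 0"
proof -
  let ?B = "map_mat complex_of_real A"
  from ev obtain v where v: "v \<in> carrier_vec n" "v \<noteq> 0\<^sub>v n" "?B *\<^sub>v v = z \<cdot>\<^sub>v v"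
    unfolding eigenvalue_def eigenvector_def using A by auto
  have Bv: "(?B *\<^sub>v v) $ i = (\<Sum>j<n. complex_of_real (A $$ (i,j)) * v $ j)" if "i < n" for i
    using that A v(1) by (auto simp: scalar_prod_def atLeast0LessThan intro!: sum.cong)
  define S where "S = (\<Sum>i<n. cnj (v $ i) * (?B *\<^sub>v v) $ i)"
  define T where "T = (\<Sum>i<n. cnj (v $ i) * v $ i)"
  have ST: "S = z * T" unfolding S_def T_def using v(1,3)
    by (auto simp: sum_distrib_left algebra_simps intro!: sum.cong)
  have S2: "S = (\<Sum>i<n. \<Sum>j<n. complex_of_real (A $$ (i,j)) * (cnj (v $ i) * v $ j))"
    unfolding S_def by (simp add: Bv sum_distrib_left algebra_simps)
  have "cnj S = (\<Sum>i<n. \<Sum>j<n. complex_of_real (A $$ (i,j)) * (v $ i * cnj (v $ j)))"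
    unfolding S2 by (simp add: cnj_sum mult.commute)
  also have "\<dots> = (\<Sum>j<n. \<Sum>i<n. complex_of_real (A $$ (i,j)) * (v $ i * cnj (v $ j)))"
    by (rule sum.swap)
  also have "\<dots> = S" unfolding S2
    by (intro sum.cong refl) (simp add: sym mult.commute)
  finally have "Im S = 0" by (metis cnj.simps(2) neg_equal_zero)
  have T_real: "T = complex_of_real (\<Sum>i<n. (cmod (v $ i))^2)"
    unfolding T_def of_real_sum
    by (intro sum.cong refl) (metis complex_norm_square mult.commute of_real_power)
  obtain i where i: "i < n" "v $ i \<noteq> 0"
    using v(1,2) by (metis carrier_vecD eq_vecI index_zero_vec(1,2))
  have "0 < (cmod (v $ i))^2" using i by simp
  also have "\<dots> \<le> (\<Sum>i<n. (cmod (v $ i))^2)" using i by (intro member_le_sum) auto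
  finally show ?thesis using \<open>Im S = 0\<close> ST T_real by simp
qed

lemma char_poly_real_symmetric_splits:
  fixes A :: "real mat"
  assumes A: "A \<in> carrier_mat n n" and sym: "\<And>i j. i < n \<Longrightarrow> j < n \<Longrightarrow> A $$ (i,j) = A $$ (j,i)"
  shows "\<exists>ls. length ls = n \<and> sorted (rev ls) \<and> char_poly A = (\<Prod>x\<leftarrow>ls. [:- x, 1:])"
proof -
  let ?B = "map_mat complex_of_real A"
  have B: "?B \<in> carrier_mat n n" using A by simp
  obtain zs where zs: "char_poly ?B = (\<Prod>z\<leftarrow>zs. [:- z, 1:])" "length zs = n"
    using char_poly_factorized[OF B] by blast
  have "eigenvalue ?B z" if "z \<in> set zs" for z
    using that unfolding eigenvalue_root_char_poly[OF B] zs(1) root_prod_linear_factors_iff .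
  then have real: "Im z = 0" if "z \<in> set zs" for z
    using eigenvalue_real_if_symmetric[OF A sym] that by blast
  define rs where "rs = map Re zs"
  have zs_rs: "zs = map complex_of_real rs"
    unfolding rs_def map_map by (rule map_idI[symmetric]) (simp add: complex_eq_iff real)
  have "complex_of_real (poly (char_poly A) t) = complex_of_real (\<Prod>x\<leftarrow>rs. t - x)" for t
  proof -
    have "complex_of_real (poly (char_poly A) t) = poly (char_poly ?B) (of_real t)"
      unfolding of_real_hom.char_poly_hom[OF A] of_real_hom.poly_map_poly ..
    also have "\<dots> = (\<Prod>x\<leftarrow>rs. of_real t - of_real x)"
      unfolding zs(1) poly_prod_linear_factors zs_rs by (simp add: o_def)
    also have "\<dots> = complex_of_real (\<Prod>x\<leftarrow>rs. t - x)"
      by (induction rs) simp_all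
    finally show ?thesis .
  qed
  then have "char_poly A = (\<Prod>x\<leftarrow>rs. [:- x, 1:])"
    by (intro poly_eq_prod_linear_factors) (simp only: of_real_eq_iff)
  also have "\<dots> = (\<Prod>x\<leftarrow>rev (sort rs). [:- x, 1:])"
    using prod_mset_prod_list[of "map (\<lambda>x. [:- x, 1:]) rs"]
      prod_mset_prod_list[of "map (\<lambda>x. [:- x, 1:]) (rev (sort rs))"] by simp
  finally show ?thesis using zs(2) zs_rs by (intro exI[of _ "rev (sort rs)"]) simp
qed

lemma eigenvalues_desc_eq:
  assumes "length ls = n" "sorted (rev ls)" "char_poly (adj_matrix n E) = (\<Prod>x\<leftarrow>ls. [:- x, 1:])"
  shows "eigenvalues_desc n E = ls"
  unfolding eigenvalues_desc_def
proof (rule the_equality)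
  fix ks
  assume ks: "length ks = n \<and> sorted (rev ks) \<and> char_poly (adj_matrix n E) = (\<Prod>x\<leftarrow>ks. [:- x, 1:])"
  then have "mset (rev ls) = mset (rev ks)"
    using assms(3) prod_linear_factors_eq_imp_mset_eq by (metis mset_rev)
  then show "ks = ls" using properties_for_sort ks assms(2) by (metis rev_rev_ident)
qed (use assms in simp)

section \<open>Spectra symmetric about zero\<close>

definition diag_mat_fun :: "nat \<Rightarrow> (nat \<Rightarrow> 'a::semiring_0) \<Rightarrow> 'a mat" where
  "diag_mat_fun n d = mat n n (\<lambda>(i,j). if i = j then d i else 0)"

lemma dim_diag_mat_fun [simp]:
  "dim_row (diag_mat_fun n d) = n" "dim_col (diag_mat_fun n d) = n"
  by (simp_all add: diag_mat_fun_def)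

lemma diag_mat_fun_mult_left:
  assumes M: "M \<in> carrier_mat n m" and i: "i < n" and j: "j < m"
  shows "(diag_mat_fun n d * M) $$ (i,j) = d i * M $$ (i,j)"
proof -
  have "(diag_mat_fun n d * M) $$ (i,j) = (\<Sum>k\<in>{0..<n}. (if i = k then d i else 0) * M $$ (k,j))"
    using M i j by (simp add: diag_mat_fun_def scalar_prod_def)
  also have "\<dots> = d i * M $$ (i,j)"
    using i by (simp add: if_distrib[of "\<lambda>x. x * _"] cong: if_cong)
  finally show ?thesis .
qed

lemma diag_mat_fun_mult_right:
  assumes M: "M \<in> carrier_mat m n" and i: "i < m" and j: "j < n"
  shows "(M * diag_mat_fun n d) $$ (i,j) = M $$ (i,j) * d j"
proof -
  have "(M * diag_mat_fun n d) $$ (i,j) = (\<Sum>k\<in>{0..<n}. M $$ (i,k) * (if k = j then d j else 0))"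
    using M i j by (auto simp: diag_mat_fun_def scalar_prod_def intro!: sum.cong)
  also have "\<dots> = M $$ (i,j) * d j"
    using j by (simp add: if_distrib[of "\<lambda>x. _ * x"] cong: if_cong)
  finally show ?thesis .
qed

lemma char_poly_uminus_eq_if_sign_similar:
  fixes A :: "'a::comm_ring_1 mat"
  assumes A: "A \<in> carrier_mat n n" and d: "\<And>i. i < n \<Longrightarrow> d i * d i = 1"
    and anti: "\<And>i j. i < n \<Longrightarrow> j < n \<Longrightarrow> d i * A $$ (i,j) * d j = - A $$ (i,j)"
  shows "char_poly (-A) = char_poly A"
proof -
  let ?D = "diag_mat_fun n d"
  have D: "?D \<in> carrier_mat n n" by auto
  have DD: "?D * ?D = 1\<^sub>m n"
  proof (rule eq_matI)
    fix i j assume "i < dim_row (1\<^sub>m n)" "j < dim_col (1\<^sub>m n)"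
    then show "(?D * ?D) $$ (i,j) = 1\<^sub>m n $$ (i,j)"
      using d by (subst diag_mat_fun_mult_left[OF D]) (auto simp: diag_mat_fun_def)
  qed auto
  have DA: "?D * A \<in> carrier_mat n n" using A by auto
  have "-A = ?D * A * ?D"
  proof (rule eq_matI)
    fix i j assume "i < dim_row (?D * A * ?D)" "j < dim_col (?D * A * ?D)"
    then have ij: "i < n" "j < n" by auto
    have "(?D * A * ?D) $$ (i,j) = d i * A $$ (i,j) * d j"
      by (simp only: diag_mat_fun_mult_right[OF DA ij] diag_mat_fun_mult_left[OF A ij])
    then show "(-A) $$ (i,j) = (?D * A * ?D) $$ (i,j)" using anti[OF ij] A ij by simp
  qed (use A in auto)
  then have "similar_mat (-A) A"
    unfolding similar_mat_def similar_mat_wit_def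
    by (intro exI[of _ ?D]) (use A DD in \<open>auto simp: Let_def\<close>)
  then show ?thesis by (rule char_poly_similar)
qed

lemma roots_symmetric_if_char_poly_uminus_eq:
  fixes A :: "'a::{field,ring_char_0} mat"
  assumes A: "A \<in> carrier_mat n n" and cp: "char_poly A = (\<Prod>x\<leftarrow>ls. [:- x, 1:])"
    and neg: "char_poly (-A) = char_poly A"
  shows "mset ls = mset (map uminus ls)"
proof -
  have "poly (char_poly A) (-t) = (-1)^n * poly (char_poly A) t" for t
  proof -
    have minus_A: "- char_matrix A (-t) = (-1) \<cdot>\<^sub>m (A + t \<cdot>\<^sub>m 1\<^sub>m n)"
      using A by (intro eq_matI) (auto simp: char_matrix_def)
    have minus_neg_A: "- char_matrix (-A) t = A + t \<cdot>\<^sub>m 1\<^sub>m n"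
      using A by (intro eq_matI) (auto simp: char_matrix_def)
    have "poly (char_poly A) (-t) = det ((-1) \<cdot>\<^sub>m (A + t \<cdot>\<^sub>m 1\<^sub>m n))"
      unfolding char_poly_matrix[OF A] minus_A ..
    also have "\<dots> = (-1)^n * det (A + t \<cdot>\<^sub>m 1\<^sub>m n)"
      using A by (simp add: det_smult)
    also have "det (A + t \<cdot>\<^sub>m 1\<^sub>m n) = poly (char_poly (-A)) t"
      using A by (simp add: char_poly_matrix[of "-A" n] minus_neg_A)
    finally show ?thesis using neg by simp
  qed
  moreover have "length ls = n"
    using degree_monic_char_poly[OF A] cp degree_prod_linear_factors by metis
  moreover have "(\<Prod>x\<leftarrow>ls. -t - x) = (-1)^length ls * (\<Prod>x\<leftarrow>ls. t + x)" for t
    by (induction ls) (simp_all add: algebra_simps)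
  ultimately have "(\<Prod>x\<leftarrow>ls. t - x) = (\<Prod>x\<leftarrow>map uminus ls. t - x)" for t
    unfolding cp poly_prod_linear_factors by (simp add: o_def)
  then have "(\<Prod>x\<leftarrow>ls. [:- x, 1:]) = (\<Prod>x\<leftarrow>map uminus ls. [:- x, 1:])"
    by (intro poly_eq_prod_linear_factors) (simp add: poly_prod_linear_factors)
  then show ?thesis by (rule prod_linear_factors_eq_imp_mset_eq)
qed

text \<open>A counting argument: at most half of the remaining entries exceed \<open>|l|\<close> and, by symmetry,
  equally many lie below \<open>-|l|\<close>, so the middle entries of the sorted list lie in \<open>[-|l|, |l|]\<close>.\<close>
lemma sorted_symmetric_middle_abs_le:
  fixes ls :: "real list"
  assumes len: "length ls = n" and sorted: "sorted (rev ls)"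
    and symm: "mset ls = mset (map uminus ls)" and l: "l \<in> set ls"
  shows "max \<bar>ls ! ((n + 1) div 2 - 1)\<bar> \<bar>ls ! ((n + 2) div 2 - 1)\<bar> \<le> \<bar>l\<bar>"
proof -
  define k1 where "k1 = (n + 1) div 2 - 1"
  define k2 where "k2 = (n + 2) div 2 - 1"
  define above where "above = {i. i < n \<and> ls ! i > \<bar>l\<bar>}"
  define below where "below = {i. i < n \<and> - ls ! i > \<bar>l\<bar>}"
  obtain i0 where i0: "i0 < n" "ls ! i0 = l" using l len by (metis in_set_conv_nth)
  have "card below = length (filter (\<lambda>x. x > \<bar>l\<bar>) (map uminus ls))"
    unfolding below_def len[symmetric] by (simp add: length_filter_conv_card filter_map o_def)
  also have "\<dots> = card above"
    unfolding above_def len[symmetric] symm[symmetric]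
    by (metis length_filter_conv_card mset_filter size_mset symm)
  finally have card_eq: "card below = card above" .
  have "card above + card below = card (above \<union> below)"
    by (rule card_Un_disjoint[symmetric]) (auto simp: above_def below_def)
  also have "\<dots> \<le> card ({0..<n} - {i0})"
    by (rule card_mono) (use i0 in \<open>auto simp: above_def below_def\<close>)
  finally have half: "2 * card above \<le> n - 1" using card_eq i0 by simp
  have "\<not> ls ! k1 > \<bar>l\<bar>"
  proof
    assume "ls ! k1 > \<bar>l\<bar>"
    then have "{0..k1} \<subseteq> above"
      using sorted_rev_nth_mono[OF sorted] i0 len unfolding above_def k1_def
      by (auto intro: less_le_trans)
    from card_mono[OF _ this] half show False unfolding above_def k1_def by simp
  qed
  moreover have "\<not> - ls ! k2 > \<bar>l\<bar>"
  proof
    assume "- ls ! k2 > \<bar>l\<bar>"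
    then have "{k2..<n} \<subseteq> below"
      using sorted_rev_nth_mono[OF sorted] len unfolding below_def k2_def
      by (auto intro: less_le_trans)
    then have "n - k2 \<le> card below" using card_mono[of below "{k2..<n}"] by (simp add: below_def)
    with half card_eq i0(1) show False unfolding k2_def by presburger
  qed
  moreover have "ls ! k2 \<le> ls ! k1"
    using sorted_rev_nth_mono[OF sorted, of k1 k2] i0 len unfolding k1_def k2_def by simp
  ultimately show ?thesis unfolding k1_def k2_def by (auto simp: abs_le_iff)
qed

section \<open>Rayleigh quotients\<close>

definition quad_form :: "nat \<Rightarrow> (nat \<Rightarrow> nat \<Rightarrow> real) \<Rightarrow> (nat \<Rightarrow> real) \<Rightarrow> real" where
  "quad_form n m w = (\<Sum>i<n. \<Sum>j<n. m i j * w i * w j)"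

definition sum_sq :: "nat \<Rightarrow> (nat \<Rightarrow> real) \<Rightarrow> real" where
  "sum_sq n w = (\<Sum>i<n. (w i)^2)"

lemma sum_sq_nonneg: "sum_sq n w \<ge> 0"
  unfolding sum_sq_def by (intro sum_nonneg) auto

lemma sum_sq_eq_0_iff: "sum_sq n w = 0 \<longleftrightarrow> (\<forall>i<n. w i = 0)"
  unfolding sum_sq_def by (subst sum_nonneg_eq_0_iff) auto

lemma sq_le_sum_sq: "i < n \<Longrightarrow> (w i)^2 \<le> sum_sq n w"
  unfolding sum_sq_def by (rule member_le_sum) auto

lemma quad_form_scale: "quad_form n m (\<lambda>i. c * w i) = c^2 * quad_form n m w"
  unfolding quad_form_def power2_eq_square by (simp add: sum_distrib_left algebra_simps)

lemma sum_sq_scale: "sum_sq n (\<lambda>i. c * w i) = c^2 * sum_sq n w"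
  unfolding sum_sq_def by (simp add: sum_distrib_left algebra_simps power2_eq_square)

lemma quad_form_add_scaled:
  "quad_form n m (\<lambda>i. u i + t * r i) =
     quad_form n m u + t * (\<Sum>i<n. \<Sum>j<n. m i j * (u i * r j + r i * u j)) + t^2 * quad_form n m r"
  unfolding quad_form_def power2_eq_square
  by (simp add: algebra_simps sum.distrib sum_distrib_left)

lemma sum_sq_add_scaled:
  "sum_sq n (\<lambda>i. u i + t * r i) = sum_sq n u + 2 * t * (\<Sum>i<n. u i * r i) + t^2 * sum_sq n r"
  unfolding sum_sq_def power2_eq_square
  by (simp add: algebra_simps sum.distrib sum_distrib_left)

text \<open>The Rayleigh quotient is minimised on the unit sphere, which is compact in the product
  topology once the coordinates outside \<open>{..<n}\<close> are pinned to \<open>0\<close>.\<close>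
lemma exists_rayleigh_minimizer:
  assumes n: "n \<ge> 1"
  shows "\<exists>u. sum_sq n u = 1 \<and> (\<forall>w. quad_form n m u * sum_sq n w \<le> quad_form n m w)"
proof -
  define K where "K = (\<lambda>i::nat. if i < n then {-1..1::real} else {0})"
  define S where "S = Pi UNIV K \<inter> {w. sum_sq n w = 1}"
  have "compactin (product_topology (\<lambda>_. euclidean) UNIV) (PiE UNIV K)"
    unfolding compactin_PiE K_def by auto
  then have "compact (Pi UNIV K)"
    by (simp add: euclidean_product_topology PiE_UNIV_domain)
  moreover have "closed {w. sum_sq n w = 1}"
    unfolding sum_sq_def
    by (intro closed_Collect_eq continuous_on_sum continuous_intros continuous_on_product_coordinates)
  ultimately have "compact S" unfolding S_def by (rule compact_Int_closed)
  moreover have "(\<lambda>i. if i = 0 then 1 else 0) \<in> S"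
    using n unfolding S_def K_def sum_sq_def by (auto simp: if_distrib[of "\<lambda>x. x^2"] cong: if_cong)
  then have "S \<noteq> {}" by auto
  moreover have "continuous_on S (quad_form n m)"
    unfolding quad_form_def
    by (intro continuous_on_sum continuous_intros
        continuous_on_subset[OF continuous_on_product_coordinates]) auto
  ultimately obtain u where u: "u \<in> S" and u_min: "\<And>y. y \<in> S \<Longrightarrow> quad_form n m u \<le> quad_form n m y"
    using continuous_attains_inf by metis
  have "quad_form n m u * sum_sq n w \<le> quad_form n m w" for w
  proof (cases "sum_sq n w = 0")
    case True
    then have "quad_form n m w = 0" unfolding sum_sq_eq_0_iff quad_form_def by simp
    with True show ?thesis by simp
  next
    case False
    then have pos: "sum_sq n w > 0" using sum_sq_nonneg[of n w] by simp
    define c where "c = 1 / sqrt (sum_sq n w)"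
    define w' where "w' = (\<lambda>i. if i < n then c * w i else 0)"
    have "quad_form n m w' = c^2 * quad_form n m w" "sum_sq n w' = c^2 * sum_sq n w"
      unfolding quad_form_scale[symmetric] sum_sq_scale[symmetric]
      by (simp_all add: w'_def quad_form_def sum_sq_def)
    moreover have c2: "c^2 = 1 / sum_sq n w" using pos by (simp add: c_def power_divide)
    ultimately have q': "quad_form n m w' = quad_form n m w / sum_sq n w" and n': "sum_sq n w' = 1"
      using pos by simp_all
    have "w' i \<in> K i" for i
    proof (cases "i < n")
      case True
      then have "(w' i)^2 \<le> 1" using sq_le_sum_sq[of i n w'] n' by simp
      then show ?thesis using True unfolding K_def by (simp add: abs_square_le_1 abs_le_iff)
    qed (simp add: K_def w'_def)
    then have "w' \<in> S" using n' unfolding S_def by auto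
    from u_min[OF this] show ?thesis using pos q' by (simp add: pos_le_divide_eq)
  qed
  moreover have "sum_sq n u = 1" using u unfolding S_def by simp
  ultimately show ?thesis by blast
qed

lemma linear_coeff_zero_if_nonneg:
  fixes a b :: real
  assumes "\<And>t. 0 \<le> a * t + b * t^2"
  shows "a = 0"
proof (rule ccontr)
  assume "a \<noteq> 0"
  define s where "s = \<bar>b\<bar> + 1"
  have s: "s > 0" "b - s < 0" unfolding s_def by auto
  have "a * (- a / s) + b * (- a / s)^2 = a^2 * (b - s) / s^2"
    using s by (simp add: field_simps power2_eq_square)
  also have "\<dots> < 0"
    using \<open>a \<noteq> 0\<close> s by (intro divide_neg_pos mult_pos_neg) auto
  finally show False using assms[of "- a / s"] by simp
qed

text \<open>First variation: perturbing a minimiser \<open>u\<close> along the residual \<open>r = m u - c u\<close> changes the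
  Rayleigh numerator by \<open>2 t |r|\<^sup>2 + O(t\<^sup>2)\<close>, so \<open>r = 0\<close>.\<close>
lemma rayleigh_minimizer_eigen:
  assumes sym: "\<And>i j. i < n \<Longrightarrow> j < n \<Longrightarrow> m i j = m j i"
    and u: "sum_sq n u = 1" and u_min: "\<And>w. quad_form n m u * sum_sq n w \<le> quad_form n m w"
    and i: "i < n"
  shows "(\<Sum>j<n. m i j * u j) = quad_form n m u * u i"
proof -
  define c where "c = quad_form n m u"
  define r where "r = (\<lambda>i. (\<Sum>j<n. m i j * u j) - c * u i)"
  have "(\<Sum>i<n. \<Sum>j<n. m i j * (u i * r j)) = (\<Sum>i<n. \<Sum>j<n. m i j * (r i * u j))"
    by (subst sum.swap) (intro sum.cong refl, simp add: sym mult.commute)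
  then have cross: "(\<Sum>i<n. \<Sum>j<n. m i j * (u i * r j + r i * u j))
      = 2 * (\<Sum>i<n. r i * (\<Sum>j<n. m i j * u j))"
    by (simp add: algebra_simps sum.distrib sum_distrib_left)
  have residual: "(\<Sum>i<n. r i * (\<Sum>j<n. m i j * u j)) - c * (\<Sum>i<n. u i * r i) = sum_sq n r"
    unfolding sum_sq_def r_def power2_eq_square
    by (simp add: algebra_simps sum_subtractf sum_distrib_left sum.distrib)
  have "0 \<le> (2 * sum_sq n r) * t + (quad_form n m r - c * sum_sq n r) * t^2" for t
    using u_min[of "\<lambda>i. u i + t * r i"] residual
    unfolding quad_form_add_scaled sum_sq_add_scaled cross u c_def[symmetric]
    by (simp add: algebra_simps)
  then have "sum_sq n r = 0" using linear_coeff_zero_if_nonneg by fastforce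
  then show ?thesis using i unfolding sum_sq_eq_0_iff r_def c_def by simp
qed

text \<open>Test the Rayleigh quotient on the unit vector at \<open>x\<close>; if equality holds, that vector is
  itself a minimiser, hence an eigenvector, which kills the rest of column \<open>x\<close>.\<close>
lemma symmetric_least_eigenvalue_le_diag:
  assumes sym: "\<And>i j. i < n \<Longrightarrow> j < n \<Longrightarrow> m i j = m j i" and x: "x < n"
  shows "\<exists>u c. sum_sq n u = 1 \<and> (\<forall>i<n. (\<Sum>j<n. m i j * u j) = c * u i) \<and>
    c \<le> m x x \<and> (c = m x x \<longrightarrow> (\<forall>i<n. i \<noteq> x \<longrightarrow> m i x = 0))"
proof -
  define e where "e = (\<lambda>j. if j = x then 1 else 0 :: real)"
  have sum_e: "(\<Sum>j<n. f j * e j) = f x" for f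
    using x unfolding e_def by (simp add: if_distrib[of "\<lambda>y. _ * y"] cong: if_cong)
  have e: "sum_sq n e = 1"
    using x unfolding sum_sq_def e_def by (simp add: if_distrib[of "\<lambda>y. y^2"] cong: if_cong)
  have qe: "quad_form n m e = m x x"
    unfolding quad_form_def by (simp add: sum_e mult.assoc[symmetric])
  obtain u where u: "sum_sq n u = 1" and u_min: "\<And>w. quad_form n m u * sum_sq n w \<le> quad_form n m w"
    using exists_rayleigh_minimizer[of n m] x by auto
  have "\<forall>i<n. (\<Sum>j<n. m i j * u j) = quad_form n m u * u i"
    using rayleigh_minimizer_eigen[OF sym u u_min] by blast
  moreover have "quad_form n m u \<le> m x x" using u_min[of e] e qe by simp
  moreover have "m i x = 0" if eq: "quad_form n m u = m x x" and i: "i < n" "i \<noteq> x" for i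
  proof -
    have "\<And>w. quad_form n m e * sum_sq n w \<le> quad_form n m w" using u_min eq qe by simp
    from rayleigh_minimizer_eigen[OF sym e this i(1)] show "m i x = 0"
      using i(2) by (simp add: sum_e) (simp add: e_def)
  qed
  ultimately show ?thesis using u by blast
qed

lemma root_char_poly_if_eigenfun:
  fixes a :: "nat \<Rightarrow> nat \<Rightarrow> 'a::field"
  assumes i0: "i0 < n" "f i0 \<noteq> 0"
    and ev: "\<And>i. i < n \<Longrightarrow> (\<Sum>k<n. a i k * f k) = \<mu> * f i"
  shows "poly (char_poly (mat n n (\<lambda>(i,j). a i j))) \<mu> = 0"
proof -
  let ?A = "mat n n (\<lambda>(i,j). a i j)"
  let ?v = "vec n f"
  have "?A *\<^sub>v ?v = \<mu> \<cdot>\<^sub>v ?v"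
  proof (rule eq_vecI)
    fix i assume "i < dim_vec (\<mu> \<cdot>\<^sub>v ?v)"
    then have i: "i < n" by simp
    have "(?A *\<^sub>v ?v) $ i = (\<Sum>k<n. a i k * f k)"
      using i by (auto simp: scalar_prod_def atLeast0LessThan intro!: sum.cong)
    then show "(?A *\<^sub>v ?v) $ i = (\<mu> \<cdot>\<^sub>v ?v) $ i" using ev[OF i] i by simp
  qed simp
  moreover have "?v \<noteq> 0\<^sub>v n" using i0 by (metis index_vec index_zero_vec(1))
  ultimately have "eigenvalue ?A \<mu>"
    unfolding eigenvalue_def eigenvector_def by (intro exI[of _ ?v]) simp
  then show ?thesis using eigenvalue_root_char_poly[of ?A n] by simp
qed

text \<open>If \<open>A\<^sup>2 u = c u\<close> for a symmetric \<open>A\<close>, then \<open>c = |A u|\<^sup>2 \<ge> 0\<close>; with \<open>t = \<surd>c\<close>,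
  either \<open>A u + t u\<close> is an eigenvector of \<open>A\<close> for \<open>t\<close> or \<open>u\<close> is one for \<open>-t\<close>.\<close>
lemma root_char_poly_if_square_eigenfun:
  assumes sym: "\<And>i j. i < n \<Longrightarrow> j < n \<Longrightarrow> a i j = a j i" and u: "sum_sq n u = 1"
    and ev: "\<And>i. i < n \<Longrightarrow> (\<Sum>j<n. (\<Sum>k<n. a i k * a k j) * u j) = c * u i"
  shows "\<exists>\<mu>. poly (char_poly (mat n n (\<lambda>(i,j). a i j))) \<mu> = 0 \<and> \<mu>^2 = c"
proof -
  define Au where "Au = (\<lambda>k. \<Sum>j<n. a k j * u j)"
  have "(\<Sum>k<n. a i k * Au k) = (\<Sum>j<n. (\<Sum>k<n. a i k * a k j) * u j)" for i
    unfolding Au_def sum_distrib_left sum_distrib_right by (subst sum.swap) (simp add: mult.assoc)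
  then have AAu: "(\<Sum>k<n. a i k * Au k) = c * u i" if "i < n" for i
    using ev[OF that] by simp
  have "c = (\<Sum>i<n. c * (u i)^2)"
    using u unfolding sum_sq_def by (simp add: sum_distrib_left[symmetric])
  also have "\<dots> = (\<Sum>i<n. u i * (\<Sum>k<n. a i k * Au k))"
    by (intro sum.cong refl) (simp add: AAu power2_eq_square)
  also have "\<dots> = (\<Sum>k<n. \<Sum>i<n. a i k * u i * Au k)"
    by (subst sum.swap) (simp add: sum_distrib_left algebra_simps)
  also have "\<dots> = (\<Sum>k<n. Au k * Au k)"
    unfolding Au_def by (intro sum.cong refl) (simp add: sum_distrib_right sym algebra_simps)
  finally have "c \<ge> 0" by (simp add: sum_nonneg)
  define t where "t = sqrt c"
  have t2: "t^2 = c" using \<open>c \<ge> 0\<close> unfolding t_def by simp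
  define w where "w = (\<lambda>i. Au i + t * u i)"
  show ?thesis
  proof (cases "\<exists>i<n. w i \<noteq> 0")
    case True
    then obtain i0 where "i0 < n" "w i0 \<noteq> 0" by blast
    moreover have "(\<Sum>k<n. a i k * w k) = t * w i" if "i < n" for i
      using AAu[OF that] t2 unfolding w_def Au_def
      by (simp add: algebra_simps sum.distrib sum_distrib_left power2_eq_square)
    ultimately show ?thesis using t2 root_char_poly_if_eigenfun by blast
  next
    case False
    obtain i0 where "i0 < n" "u i0 \<noteq> 0" using u sum_sq_eq_0_iff[of n u] by auto
    moreover have "(\<Sum>k<n. a i k * u k) = - t * u i" if "i < n" for i
      using False that unfolding w_def Au_def by (simp add: add_eq_0_iff)
    ultimately show ?thesis using t2 root_char_poly_if_eigenfun[of i0 n u a "-t"] by auto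
  qed
qed

section \<open>Adjacency spectra of graphs\<close>

definition adj :: "(nat \<Rightarrow> nat \<Rightarrow> bool) \<Rightarrow> nat \<Rightarrow> nat \<Rightarrow> real" where
  "adj E i j = of_bool (E i j)"

lemma adj_matrix_eq_mat_adj: "adj_matrix n E = mat n n (\<lambda>(i,j). adj E i j)"
  by (simp add: adj_matrix_def adj_def of_bool_def)

lemma simple_graph_sym: "simple_graph n E \<Longrightarrow> u < n \<Longrightarrow> v < n \<Longrightarrow> E u v \<Longrightarrow> E v u"
  unfolding simple_graph_def by blast

lemma simple_graph_irrefl: "simple_graph n E \<Longrightarrow> v < n \<Longrightarrow> \<not> E v v"
  unfolding simple_graph_def by blast

definition path2_endpoint :: "nat \<Rightarrow> (nat \<Rightarrow> nat \<Rightarrow> bool) \<Rightarrow> nat \<Rightarrow> bool" where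
  "path2_endpoint n E x \<longleftrightarrow> (\<exists>i<n. \<exists>k<n. i \<noteq> x \<and> E i k \<and> E k x)"

lemma adj_sym:
  assumes "simple_graph n E" "i < n" "j < n"
  shows "adj E i j = adj E j i"
proof -
  have "E i j \<longleftrightarrow> E j i" using simple_graph_sym assms by blast
  then show ?thesis by (simp add: adj_def)
qed

lemma degree_eq_sum_adj: "real (degree n E x) = (\<Sum>k<n. adj E x k)"
  unfolding degree_def adj_def by (simp add: lessThan_def Collect_conj_eq)

text \<open>Apply the least-eigenvalue bound to \<open>A\<^sup>2\<close>, whose diagonal entry at \<open>x\<close> is the degree
  of \<open>x\<close> and whose off-diagonal entries count walks of length two.\<close>
lemma adj_eigenvalue_sq_le_degree:
  assumes sg: "simple_graph n E" and x: "x < n"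
  obtains \<mu> where "poly (char_poly (adj_matrix n E)) \<mu> = 0" "\<mu>^2 \<le> degree n E x"
    "\<mu>^2 = degree n E x \<Longrightarrow> \<not> path2_endpoint n E x"
proof -
  define m where "m = (\<lambda>i j. \<Sum>k<n. adj E i k * adj E k j)"
  have m_sym: "m i j = m j i" if "i < n" "j < n" for i j
    unfolding m_def using that by (intro sum.cong refl) (simp add: adj_sym[OF sg] mult.commute)
  have m_diag: "m x x = degree n E x"
    unfolding m_def degree_eq_sum_adj using adj_sym[OF sg x] by (intro sum.cong refl) (simp add: adj_def)
  obtain u c where u: "sum_sq n u = 1" "\<And>i. i < n \<Longrightarrow> (\<Sum>j<n. m i j * u j) = c * u i"
    and c: "c \<le> m x x" "c = m x x \<Longrightarrow> \<forall>i<n. i \<noteq> x \<longrightarrow> m i x = 0"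
    using symmetric_least_eigenvalue_le_diag[of n m x, OF m_sym x] by blast
  obtain \<mu> where \<mu>: "poly (char_poly (adj_matrix n E)) \<mu> = 0" "\<mu>^2 = c"
    using root_char_poly_if_square_eigenfun[OF adj_sym[OF sg] u[unfolded m_def]]
    unfolding adj_matrix_eq_mat_adj by blast
  show thesis
  proof (rule that[OF \<mu>(1)])
    show "\<mu>^2 \<le> degree n E x" using c(1) m_diag \<mu>(2) by simp
    assume "\<mu>^2 = degree n E x"
    then have m_col: "m i x = 0" if "i < n" "i \<noteq> x" for i
      using c(2) m_diag \<mu>(2) that by simp
    show "\<not> path2_endpoint n E x"
    proof
      assume "path2_endpoint n E x"
      then obtain i k where ik: "i < n" "k < n" "E i k" "E k x" "i \<noteq> x"
        unfolding path2_endpoint_def by blast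
      have "(\<Sum>k<n. adj E i k * adj E k x) = 0" using m_col[OF ik(1,5)] unfolding m_def .
      then have "adj E i k * adj E k x = 0"
        using ik(2) by (subst (asm) sum_nonneg_eq_0_iff) (auto simp: adj_def)
      then show False using ik(3,4) by (simp add: adj_def)
    qed
  qed
qed

lemma HL_index_le_abs_root:
  assumes sg: "simple_graph n E" and bip: "bipartite n E"
    and \<mu>: "poly (char_poly (adj_matrix n E)) \<mu> = 0"
  shows "HL_index n E \<le> \<bar>\<mu>\<bar>"
proof -
  let ?A = "adj_matrix n E"
  have A: "?A \<in> carrier_mat n n" by (simp add: adj_matrix_def)
  have A_index: "?A $$ (i,j) = adj E i j" if "i < n" "j < n" for i j
    using that by (simp add: adj_matrix_eq_mat_adj)
  have A_sym: "?A $$ (i,j) = ?A $$ (j,i)" if "i < n" "j < n" for i j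
    using that by (simp add: A_index adj_sym[OF sg])
  obtain ls where ls: "length ls = n" "sorted (rev ls)" "char_poly ?A = (\<Prod>x\<leftarrow>ls. [:- x, 1:])"
    using char_poly_real_symmetric_splits[OF A A_sym] by blast
  obtain X where X: "\<And>u v. u < n \<Longrightarrow> v < n \<Longrightarrow> E u v \<Longrightarrow> u \<in> X \<longleftrightarrow> v \<notin> X"
    using bip unfolding bipartite_def by blast
  have "char_poly (-?A) = char_poly ?A"
    by (rule char_poly_uminus_eq_if_sign_similar[OF A, of "\<lambda>i. if i \<in> X then 1 else -1"])
      (use X in \<open>auto simp: A_index adj_def\<close>)
  then have "mset ls = mset (map uminus ls)"
    by (rule roots_symmetric_if_char_poly_uminus_eq[OF A ls(3)])
  moreover have "\<mu> \<in> set ls" using \<mu> unfolding ls(3) root_prod_linear_factors_iff .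
  ultimately show ?thesis
    using sorted_symmetric_middle_abs_le[OF ls(1,2)] eigenvalues_desc_eq[OF ls]
    unfolding HL_index_def Let_def by simp
qed

lemma HL_index_le_sqrt_degree:
  assumes sg: "simple_graph n E" and bip: "bipartite n E" and x: "x < n"
  shows "HL_index n E \<le> sqrt (degree n E x)"
proof -
  obtain \<mu> where \<mu>: "poly (char_poly (adj_matrix n E)) \<mu> = 0" "\<mu>^2 \<le> degree n E x"
    using adj_eigenvalue_sq_le_degree[OF sg x] by blast
  have "HL_index n E \<le> sqrt (\<mu>^2)" using HL_index_le_abs_root[OF sg bip \<mu>(1)] by simp
  also have "\<dots> \<le> sqrt (degree n E x)" using \<mu>(2) by (rule real_sqrt_le_mono)
  finally show ?thesis .
qed

lemma HL_index_less_sqrt_degree: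
  assumes sg: "simple_graph n E" and bip: "bipartite n E" and x: "x < n"
    and path2: "path2_endpoint n E x"
  shows "HL_index n E < sqrt (degree n E x)"
proof -
  obtain \<mu> where \<mu>: "poly (char_poly (adj_matrix n E)) \<mu> = 0" "\<mu>^2 \<le> degree n E x"
    "\<mu>^2 = degree n E x \<Longrightarrow> \<not> path2_endpoint n E x"
    using adj_eigenvalue_sq_le_degree[OF sg x] by blast
  then have "\<mu>^2 < degree n E x" using path2 by fastforce
  have "HL_index n E \<le> sqrt (\<mu>^2)" using HL_index_le_abs_root[OF sg bip \<mu>(1)] by simp
  also have "\<dots> < sqrt (degree n E x)" using \<open>\<mu>^2 < degree n E x\<close> by (rule real_sqrt_less_mono)
  finally show ?thesis .
qed

lemma reachable_sym:
  assumes sg: "simple_graph n E" and r: "reachable n E a b"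
  shows "reachable n E b a"
  using r unfolding reachable_def
proof (induction rule: rtranclp_induct)
  case (step y z)
  then have "z < n \<and> y < n \<and> E z y" using simple_graph_sym[OF sg] by blast
  then show ?case using step.IH by (rule converse_rtranclp_into_rtranclp)
qed simp

lemma reachable_step: "reachable n E a b \<Longrightarrow> b < n \<Longrightarrow> c < n \<Longrightarrow> E b c \<Longrightarrow> reachable n E a c"
  unfolding reachable_def by (rule rtranclp.rtrancl_into_rtrancl) auto

lemma reachable_in_closed_set:
  assumes "reachable n E a b" "a \<in> S" and closed: "\<And>u v. u \<in> S \<Longrightarrow> v < n \<Longrightarrow> E u v \<Longrightarrow> v \<in> S"
  shows "b \<in> S"
  using assms(1) unfolding reachable_def
  by (induction rule: rtranclp_induct) (use assms(2) closed in auto)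

lemma component_eq_if_reachable:
  "simple_graph n E \<Longrightarrow> reachable n E a b \<Longrightarrow> component n E a = component n E b"
  unfolding component_def using reachable_sym reachable_def rtranclp_trans by metis

lemma exists_min_degree_vertex:
  assumes "n \<ge> 1"
  obtains x where "x < n" "degree n E x = min_degree n E"
proof -
  have "min_degree n E \<in> degree n E ` {0..<n}"
    unfolding min_degree_def using assms by (intro Min_in) auto
  then show thesis using that by auto
qed

lemma min_degree_le_degree: "v < n \<Longrightarrow> min_degree n E \<le> degree n E v"
  unfolding min_degree_def by (intro Min_le) auto

lemma path2_endpoint_of_min_degree_ge_2:
  assumes sg: "simple_graph n E" and n: "n \<ge> 1" and d: "min_degree n E \<ge> 2"
  shows "\<exists>x<n. degree n E x = min_degree n E \<and> path2_endpoint n E x"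
proof -
  obtain x where x: "x < n" "degree n E x = min_degree n E"
    using exists_min_degree_vertex[OF n] by blast
  have deg: "2 \<le> card {w. w < n \<and> E v w}" if "v < n" for v
    using d min_degree_le_degree[OF that, of E] unfolding degree_def by simp
  have "{w. w < n \<and> E x w} \<noteq> {}" using deg[OF x(1)] by (intro notI) simp
  then obtain k where k: "k < n" "E x k" by blast
  have "\<not> {w. w < n \<and> E k w} \<subseteq> {x}"
    using deg[OF k(1)] card_mono[of "{x}" "{w. w < n \<and> E k w}"] by auto
  then obtain i where i: "i < n" "E k i" "i \<noteq> x" by blast
  have "path2_endpoint n E x"
    unfolding path2_endpoint_def
    using i k simple_graph_sym[OF sg k(1) i(1,2)] simple_graph_sym[OF sg x(1) k] by blast
  with x show ?thesis by blast
qed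

lemma path2_endpoint_of_leaf_of_non_K2_component:
  assumes sg: "simple_graph n E" and d: "min_degree n E = 1" and C: "is_component n E C"
    and leaf: "min_degree_on E C = 1" and not_K2: "\<not> iso_K2_on E C"
  shows "\<exists>x<n. degree n E x = min_degree n E \<and> path2_endpoint n E x"
proof -
  obtain v where v: "v < n" "C = component n E v" using C unfolding is_component_def by blast
  have "finite C" "v \<in> C" using v unfolding component_def reachable_def by auto
  then have "min_degree_on E C \<in> (\<lambda>v. card {w \<in> C. E v w}) ` C"
    unfolding min_degree_on_def by (intro Min_in) auto
  then obtain x where x: "x \<in> C" "card {w \<in> C. E x w} = 1" using leaf by auto
  have x_n: "x < n" and "reachable n E v x" using x(1) unfolding v(2) component_def by auto
  have C_x: "C = component n E x"
    unfolding v(2) by (rule component_eq_if_reachable[OF sg \<open>reachable n E v x\<close>])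
  have "reachable n E x x" unfolding reachable_def by simp
  then have nbrs: "{w \<in> C. E x w} = {w. w < n \<and> E x w}"
    unfolding C_x component_def using reachable_step[OF _ x_n] by blast
  obtain y where y: "{w. w < n \<and> E x w} = {y}" using x(2) nbrs by (metis card_1_singletonE)
  then have y_n: "y < n" and xy: "E x y" "E y x" and x_nbr: "\<And>w. w < n \<Longrightarrow> E x w \<Longrightarrow> w = y"
    using simple_graph_sym[OF sg x_n] by auto
  have "\<exists>i<n. E y i \<and> i \<noteq> x"
  proof (rule ccontr)
    assume only_x: "\<not> ?thesis"
    have "w \<in> {x, y}" if "reachable n E x w" for w
      using that by (rule reachable_in_closed_set) (use x_nbr only_x in auto)
    then have "C \<subseteq> {x, y}" unfolding C_x component_def by blast
    moreover have "y \<in> C"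
      using reachable_step[OF \<open>reachable n E x x\<close> x_n y_n xy(1)] y_n unfolding C_x component_def by blast
    ultimately have "C = {x, y}" using x(1) by auto
    moreover have "x \<noteq> y" using simple_graph_irrefl[OF sg x_n] xy by auto
    ultimately show False using not_K2 xy unfolding iso_K2_on_def by blast
  qed
  then obtain i where i: "i < n" "E y i" "i \<noteq> x" by blast
  have "degree n E x = min_degree n E" using x(2) nbrs d unfolding degree_def by simp
  moreover have "path2_endpoint n E x"
    unfolding path2_endpoint_def using i y_n xy simple_graph_sym[OF sg y_n i(1,2)] by blast
  ultimately show ?thesis using x_n by blast
qed

theorem theorem2p5:
  fixes n :: nat and E :: "nat \<Rightarrow> nat \<Rightarrow> bool"
  assumes "n \<ge> 1" and "simple_graph n E" and "bipartite n E"
  shows "HL_index n E \<le> sqrt (real (min_degree n E)) \<and>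
        ((min_degree n E \<ge> 2 \<or>
         (min_degree n E = 1 \<and> (\<exists>C. is_component n E C \<and> min_degree_on E C = 1 \<and> \<not> iso_K2_on E C)))
         \<longrightarrow> HL_index n E < sqrt (real (min_degree n E)))"
proof -
  note n = assms(1) and sg = assms(2) and bip = assms(3)
  obtain x where x: "x < n" "degree n E x = min_degree n E"
    using exists_min_degree_vertex[OF n] by blast
  have "HL_index n E \<le> sqrt (min_degree n E)"
    using HL_index_le_sqrt_degree[OF sg bip x(1)] x(2) by simp
  moreover have "HL_index n E < sqrt (min_degree n E)"
    if strict: "min_degree n E \<ge> 2 \<or>
      (min_degree n E = 1 \<and> (\<exists>C. is_component n E C \<and> min_degree_on E C = 1 \<and> \<not> iso_K2_on E C))"
  proof -
    obtain y where "y < n" "degree n E y = min_degree n E" "path2_endpoint n E y"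
      using strict path2_endpoint_of_min_degree_ge_2[OF sg n]
        path2_endpoint_of_leaf_of_non_K2_component[OF sg] by blast
    with HL_index_less_sqrt_degree[OF sg bip] show ?thesis by fastforce
  qed
  ultimately show ?thesis by blast
qed

end
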